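(* Let $(b,c)$ be a connected graph over a countable set $X$ with a cocompact action of a group $G$, and fix $x_0\in X$. Let $f_1,f_2\in\mathrm{Dom}(H_{b,c})$ be strictly positive, normalised by $f_1(x_0)=f_2(x_0)=1$, and multiplicative with the same character $\gamma_{f_1}=\gamma_{f_2}$. If $f_1$ is superharmonic and $f_2$ is subharmonic, then $f_1=f_2$ and both are harmonic.
   Context: A graph over $X$ is $(b,c)$ with $b:X\times X\to[0,\infty)$, $c:X\to\mathbb{R}$, $\sum_yb(x,y)<\infty$ ($b$ need not be symmetric); connected: any two points are joined by a finite sequence $y_1,\dots,y_n$ with $b(y_i,y_{i+1})>0$. $H_{b,c}f(x)=\sum_yb(x,y)(f(x)-f(y))+c(x)f(x)$ on $\mathrm{Dom}(H)=\{f:\sum_yb(x,y)|f(y)|<\infty\ \forall x\}$; $f$ is superharmonic if $Hf\ge0$, subharmonic if $Hf\le0$, harmonic if $Hf=0$. $T_gf(x)=f(g^{-1}x)$; cocompact: $GV=X$ for some finite $V$. $f$ is multiplicative with character $\gamma_f$ if $\gamma_f:G\to(0,\infty)$ is a homomorphism with $T_gf=\gamma_f(g^{-1})f$ for all $g\in G$. *)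

theory Defs
  imports "HOL-Analysis.Analysis" "HOL-Algebra.Group_Action"
begin

definition is_graph :: "('x \<Rightarrow> 'x \<Rightarrow> real) \<Rightarrow> ('x \<Rightarrow> real) \<Rightarrow> bool" where
  "is_graph b c \<longleftrightarrow> (\<forall>x y. 0 \<le> b x y) \<and> (\<forall>x. (\<lambda>y. b x y) summable_on UNIV)"

definition graph_connected :: "('x \<Rightarrow> 'x \<Rightarrow> real) \<Rightarrow> bool" where
  "graph_connected b \<longleftrightarrow> (\<forall>x y. (\<lambda>u v. 0 < b u v)\<^sup>*\<^sup>* x y)"

definition dom_H :: "('x \<Rightarrow> 'x \<Rightarrow> real) \<Rightarrow> ('x \<Rightarrow> real) set" where
  "dom_H b = {f. \<forall>x. (\<lambda>y. b x y * \<bar>f y\<bar>) summable_on UNIV}"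

definition H_op :: "('x \<Rightarrow> 'x \<Rightarrow> real) \<Rightarrow> ('x \<Rightarrow> real) \<Rightarrow> ('x \<Rightarrow> real) \<Rightarrow> 'x \<Rightarrow> real" where
  "H_op b c f x = (\<Sum>\<^sub>\<infinity>y. b x y * (f x - f y)) + c x * f x"

definition graph_action :: "('g, 'm) monoid_scheme \<Rightarrow> ('g \<Rightarrow> 'x \<Rightarrow> 'x)
    \<Rightarrow> ('x \<Rightarrow> 'x \<Rightarrow> real) \<Rightarrow> ('x \<Rightarrow> real) \<Rightarrow> bool" where
  "graph_action G \<phi> b c \<longleftrightarrow> group_action G UNIV \<phi> \<and>
     (\<forall>g\<in>carrier G. \<forall>x y. b (\<phi> g x) (\<phi> g y) = b x y \<and> c (\<phi> g x) = c x)"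

definition cocompact :: "('g, 'm) monoid_scheme \<Rightarrow> ('g \<Rightarrow> 'x \<Rightarrow> 'x) \<Rightarrow> bool" where
  "cocompact G \<phi> \<longleftrightarrow> (\<exists>V. finite V \<and> (\<Union>g\<in>carrier G. \<phi> g ` V) = UNIV)"

definition is_character :: "('g, 'm) monoid_scheme \<Rightarrow> ('g \<Rightarrow> real) \<Rightarrow> bool" where
  "is_character G \<gamma> \<longleftrightarrow> (\<forall>g\<in>carrier G. 0 < \<gamma> g) \<and>
     (\<forall>g\<in>carrier G. \<forall>h\<in>carrier G. \<gamma> (g \<otimes>\<^bsub>G\<^esub> h) = \<gamma> g * \<gamma> h)"

definition multiplicative :: "('g, 'm) monoid_scheme \<Rightarrow> ('g \<Rightarrow> 'x \<Rightarrow> 'x)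
    \<Rightarrow> ('x \<Rightarrow> real) \<Rightarrow> ('g \<Rightarrow> real) \<Rightarrow> bool" where
  "multiplicative G \<phi> f \<gamma> \<longleftrightarrow> is_character G \<gamma> \<and>
     (\<forall>g\<in>carrier G. \<forall>x. f (\<phi> (inv\<^bsub>G\<^esub> g) x) = \<gamma> (inv\<^bsub>G\<^esub> g) * f x)"

end

theory Submission
  imports Defs
begin

text \<open>
  Since f1 and f2 have the same character, the quotient f2 / f1 is G-invariant, so by
  cocompactness it takes only finitely many values and attains a maximum M at some point.
  Then u = M f1 - f2 is nonnegative, superharmonic and vanishes somewhere, so by the strong
  minimum principle on the connected graph it vanishes identically; the normalisation at x0
  gives M = 1.
\<close>

lemma multiplicative_apply:
  assumes "group G" "multiplicative G \<phi> f \<gamma>" "g \<in> carrier G"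
  shows "f (\<phi> g x) = \<gamma> g * f x"
proof -
  have "inv\<^bsub>G\<^esub> g \<in> carrier G" "inv\<^bsub>G\<^esub> (inv\<^bsub>G\<^esub> g) = g"
    using assms(1,3) by (auto simp: group.inv_closed group.inv_inv)
  then show ?thesis
    using assms(2) unfolding multiplicative_def by metis
qed

lemma multiplicative_same_character_quotient_invariant:
  assumes "group G" "multiplicative G \<phi> f1 \<gamma>" "multiplicative G \<phi> f2 \<gamma>" "g \<in> carrier G"
  shows "f2 (\<phi> g x) / f1 (\<phi> g x) = f2 x / f1 x"
proof -
  have "\<gamma> g > 0"
    using assms(2,4) unfolding multiplicative_def is_character_def by auto
  then show ?thesis
    using multiplicative_apply[OF assms(1,2,4)] multiplicative_apply[OF assms(1,3,4)] by simp
qed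

lemma cocompact_invariant_finite_range:
  assumes "cocompact G \<phi>" "\<And>g x. g \<in> carrier G \<Longrightarrow> h (\<phi> g x) = h x"
  shows "finite (range h)"
proof -
  obtain V where V: "finite V" "(\<Union>g\<in>carrier G. \<phi> g ` V) = UNIV"
    using assms(1) unfolding cocompact_def by auto
  have "range h \<subseteq> h ` V"
  proof
    fix z assume "z \<in> range h"
    then obtain x where "z = h x" by auto
    moreover have "x \<in> (\<Union>g\<in>carrier G. \<phi> g ` V)" using V(2) by simp
    then obtain g v where "g \<in> carrier G" "v \<in> V" "x = \<phi> g v" by blast
    ultimately show "z \<in> h ` V" using assms(2) by auto
  qed
  then show ?thesis using V(1) finite_subset by blast
qed

lemma cocompact_invariant_attains_max:
  fixes h :: "'x \<Rightarrow> real"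
  assumes "cocompact G \<phi>" "\<And>g x. g \<in> carrier G \<Longrightarrow> h (\<phi> g x) = h x"
  obtains xm where "\<And>y. h y \<le> h xm"
proof -
  have fin: "finite (range h)" using cocompact_invariant_finite_range[where h = h, OF assms] .
  have "Max (range h) \<in> range h" using fin by (intro Max_in) auto
  then obtain xm where "h xm = Max (range h)" by auto
  then have "h y \<le> h xm" for y using fin by simp
  then show ?thesis by (rule that)
qed

lemma dom_H_summable:
  assumes "is_graph b c" "f \<in> dom_H b"
  shows "(\<lambda>y. b x y * f y) summable_on UNIV"
proof (rule abs_summable_summable)
  have "norm (b x y * f y) = b x y * \<bar>f y\<bar>" for y
    using assms(1) unfolding is_graph_def by (simp add: abs_mult)
  then show "(\<lambda>y. norm (b x y * f y)) summable_on UNIV"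
    using assms(2) unfolding dom_H_def by simp
qed

lemma dom_H_lincomb:
  assumes "is_graph b c" "f \<in> dom_H b" "g \<in> dom_H b"
  shows "(\<lambda>y. a * f y - g y) \<in> dom_H b"
  unfolding dom_H_def mem_Collect_eq
proof
  fix x
  have b: "0 \<le> b x y" for y using assms(1) unfolding is_graph_def by simp
  have "(\<lambda>y. \<bar>a\<bar> * (b x y * \<bar>f y\<bar>) + b x y * \<bar>g y\<bar>) summable_on UNIV"
    using assms(2,3) unfolding dom_H_def by (intro summable_on_add summable_on_cmult_right) auto
  moreover have "b x y * \<bar>a * f y - g y\<bar> \<le> \<bar>a\<bar> * (b x y * \<bar>f y\<bar>) + b x y * \<bar>g y\<bar>" for y
  proof -
    have "\<bar>a * f y - g y\<bar> \<le> \<bar>a\<bar> * \<bar>f y\<bar> + \<bar>g y\<bar>"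
      by (metis abs_mult abs_triangle_ineq4)
    then have "b x y * \<bar>a * f y - g y\<bar> \<le> b x y * (\<bar>a\<bar> * \<bar>f y\<bar> + \<bar>g y\<bar>)"
      by (rule mult_left_mono) (rule b)
    then show ?thesis by (simp add: algebra_simps)
  qed
  ultimately show "(\<lambda>y. b x y * \<bar>a * f y - g y\<bar>) summable_on UNIV"
    by (rule summable_on_comparison_test) (simp add: b)
qed

lemma H_op_summable:
  assumes "is_graph b c" "f \<in> dom_H b"
  shows "(\<lambda>y. b x y * (f x - f y)) summable_on UNIV"
proof -
  have "(\<lambda>y. f x * b x y + - (b x y * f y)) summable_on UNIV"
    using assms(1) dom_H_summable[OF assms] unfolding is_graph_def
    by (intro summable_on_add summable_on_cmult_right) (auto simp: summable_on_uminus)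
  then show ?thesis by (simp add: algebra_simps)
qed

lemma infsum_lincomb:
  fixes f g :: "'a \<Rightarrow> real"
  assumes "f summable_on A" "g summable_on A"
  shows "(\<Sum>\<^sub>\<infinity>y\<in>A. a * f y - g y) = a * infsum f A - infsum g A"
proof -
  have "(\<Sum>\<^sub>\<infinity>y\<in>A. a * f y - g y) = (\<Sum>\<^sub>\<infinity>y\<in>A. a * f y + - g y)"
    by simp
  also have "\<dots> = (\<Sum>\<^sub>\<infinity>y\<in>A. a * f y) + (\<Sum>\<^sub>\<infinity>y\<in>A. - g y)"
    using assms by (intro infsum_add summable_on_cmult_right) (auto simp: summable_on_uminus)
  finally show ?thesis by (simp add: infsum_cmult_right' infsum_uminus)
qed

lemma H_op_lincomb:
  assumes "is_graph b c" "f \<in> dom_H b" "g \<in> dom_H b"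
  shows "H_op b c (\<lambda>y. a * f y - g y) x = a * H_op b c f x - H_op b c g x"
proof -
  have "(\<Sum>\<^sub>\<infinity>y. b x y * ((a * f x - g x) - (a * f y - g y)))
      = (\<Sum>\<^sub>\<infinity>y. a * (b x y * (f x - f y)) - b x y * (g x - g y))"
    by (simp add: algebra_simps)
  also have "\<dots> = a * (\<Sum>\<^sub>\<infinity>y. b x y * (f x - f y)) - (\<Sum>\<^sub>\<infinity>y. b x y * (g x - g y))"
    using H_op_summable[OF assms(1,2)] H_op_summable[OF assms(1,3)] by (rule infsum_lincomb)
  finally show ?thesis unfolding H_op_def by (simp add: algebra_simps)
qed

lemma H_op_zero_neighbour:
  assumes "is_graph b c" "u \<in> dom_H b" "\<forall>y. 0 \<le> u y" "u x = 0" "H_op b c u x \<ge> 0"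
    and "0 < b x y"
  shows "u y = 0"
proof -
  have "H_op b c u x = - (\<Sum>\<^sub>\<infinity>y. b x y * u y)"
    unfolding H_op_def assms(4) by (simp add: infsum_uminus)
  then have "(\<Sum>\<^sub>\<infinity>y. b x y * u y) \<le> 0" using assms(5) by simp
  moreover have "0 \<le> b x y * u y" for y using assms(1,3) unfolding is_graph_def by simp
  ultimately have "b x y * u y = 0"
    using nonneg_infsum_le_0D[OF _ dom_H_summable[OF assms(1,2)]] by blast
  then show ?thesis using assms(6) by simp
qed

lemma graph_connected_induct:
  assumes "graph_connected b" "P x" "\<And>x y. P x \<Longrightarrow> 0 < b x y \<Longrightarrow> P y"
  shows "P y"
proof -
  have "(\<lambda>u v. 0 < b u v)\<^sup>*\<^sup>* x y" using assms(1) unfolding graph_connected_def by auto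
  then show ?thesis by (induction rule: rtranclp_induct) (use assms(2,3) in auto)
qed

lemma strong_minimum_principle:
  assumes "is_graph b c" "graph_connected b" "u \<in> dom_H b" "\<forall>y. 0 \<le> u y"
    and "\<forall>y. H_op b c u y \<ge> 0" "u x = 0"
  shows "u y = 0"
  using graph_connected_induct[of b "\<lambda>x. u x = 0", OF assms(2,6)]
    H_op_zero_neighbour[OF assms(1,3,4)] assms(5) by blast

theorem lemma9:
  fixes G :: "('g, 'm) monoid_scheme" and \<phi> :: "'g \<Rightarrow> 'x \<Rightarrow> 'x"
    and b :: "'x \<Rightarrow> 'x \<Rightarrow> real" and c :: "'x \<Rightarrow> real"
    and f1 f2 :: "'x \<Rightarrow> real" and \<gamma> :: "'g \<Rightarrow> real" and x0 :: 'x
  assumes "countable (UNIV :: 'x set)"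
    and "is_graph b c" and "graph_connected b"
    and "group G" and "graph_action G \<phi> b c" and "cocompact G \<phi>"
    and "f1 \<in> dom_H b" and "f2 \<in> dom_H b"
    and "\<forall>x. 0 < f1 x" and "\<forall>x. 0 < f2 x"
    and "f1 x0 = 1" and "f2 x0 = 1"
    and "multiplicative G \<phi> f1 \<gamma>" and "multiplicative G \<phi> f2 \<gamma>"
    and "\<forall>x. H_op b c f1 x \<ge> 0" and "\<forall>x. H_op b c f2 x \<le> 0"
  shows "f1 = f2 \<and> (\<forall>x. H_op b c f1 x = 0) \<and> (\<forall>x. H_op b c f2 x = 0)"
proof -
  have f1_pos: "0 < f1 y" for y using assms(9) by blast
  have "f2 (\<phi> g x) / f1 (\<phi> g x) = f2 x / f1 x" if "g \<in> carrier G" for g x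
    using multiplicative_same_character_quotient_invariant[OF assms(4,13,14) that] .
  then obtain xm where max: "\<And>y. f2 y / f1 y \<le> f2 xm / f1 xm"
    using cocompact_invariant_attains_max[OF assms(6), of "\<lambda>x. f2 x / f1 x"] by blast
  define M where "M = f2 xm / f1 xm"
  define u where "u = (\<lambda>y. M * f1 y - f2 y)"
  have "0 < M" using f1_pos assms(10) unfolding M_def by simp
  have u_dom: "u \<in> dom_H b" unfolding u_def by (rule dom_H_lincomb[OF assms(2,7,8)])
  have u_nonneg: "\<forall>y. 0 \<le> u y"
    using max f1_pos unfolding u_def M_def by (simp add: divide_le_eq mult.commute)
  have u_super: "\<forall>y. H_op b c u y \<ge> 0"
  proof
    fix y
    have "0 \<le> M * H_op b c f1 y" using \<open>0 < M\<close> assms(15) by simp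
    then show "H_op b c u y \<ge> 0"
      using assms(16) unfolding u_def H_op_lincomb[OF assms(2,7,8)] by (smt (verit))
  qed
  have "u xm = 0" using f1_pos[of xm] unfolding u_def M_def by simp
  then have u_zero: "u y = 0" for y
    by (rule strong_minimum_principle[OF assms(2,3) u_dom u_nonneg u_super])
  then have "M = 1" using u_zero[of x0] assms(11,12) unfolding u_def by simp
  then have "f1 = f2" using u_zero unfolding u_def by (simp add: fun_eq_iff)
  then show ?thesis using assms(15,16) by (auto intro: order.antisym)
qed

end
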